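(* Let $\{A_n\}_{n\geqslant 1}$ be i.i.d. nonnegative random variables with Laplace–Stieltjes transform $\alpha(s)=\mathbb{E}[e^{-sA_1}]$, and let $\{B_n\}_{n\geqslant 1}$ be i.i.d. exponentially distributed with rate $\mu>0$, independent of $\{A_n\}$. Let $W_1=w_1\geqslant 0$ be deterministic and $W_{n+1}=\max\{0,\,B_{n+1}-A_n-W_n\}$ for $n\geqslant 1$. Then for every $n\geqslant 1$ and $x\geqslant 0$, $$\mathbb{P}[W_{n+1}\leqslant x]=1-e^{-\mu x}\left[\frac{2\alpha(\mu)}{2+\alpha(\mu)}+\left(-\frac{\alpha(\mu)}{2}\right)^{n-1}\left(\frac{2-\alpha(\mu)}{2+\alpha(\mu)}-\mathbb{P}[W_2=0]\right)\right],$$ where $\mathbb{P}[W_2=0]=1-e^{-\mu w_1}\alpha(\mu)$. *)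

theory Defs
  imports "HOL-Probability.Probability"
begin

end

theory Submission
  imports Defs
begin

text \<open>
  Put \<open>C n = A n + W n \<ge> 0\<close>, so that \<open>W (n + 1) = max 0 (B (n + 1) - C n)\<close> with \<open>B (n + 1)\<close>
  exponential and independent of \<open>C n\<close>. Integrating out \<open>B (n + 1)\<close> first gives
  \<open>P[W (n + 1) \<le> x] = 1 - exp (- \<mu> x) E[exp (- \<mu> C n)]\<close> and
  \<open>E[exp (- \<mu> W (n + 1))] = 1 - E[exp (- \<mu> C n)] / 2\<close>, while independence of \<open>A n\<close> and
  \<open>W n\<close> factors \<open>E[exp (- \<mu> C n)] = \<alpha> \<mu> E[exp (- \<mu> W n)]\<close>. Hence
  \<open>v n = \<alpha> \<mu> E[exp (- \<mu> W (n + 1))]\<close> obeys the affine recurrence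
  \<open>v (n + 1) = \<alpha> \<mu> - (\<alpha> \<mu> / 2) v n\<close>, and solving it gives the formula.
\<close>

lemma (in prob_space) indep_var_nn_integral_iterated:
  fixes X Y :: "'a \<Rightarrow> real" and h :: "real \<times> real \<Rightarrow> ennreal"
  assumes ind: "indep_var borel X borel Y"
    and h[measurable]: "h \<in> borel_measurable (borel \<Otimes>\<^sub>M borel)"
  shows "(\<integral>\<^sup>+\<omega>. h (X \<omega>, Y \<omega>) \<partial>M) = (\<integral>\<^sup>+\<omega>. (\<integral>\<^sup>+\<omega>'. h (X \<omega>', Y \<omega>) \<partial>M) \<partial>M)"
proof -
  have [measurable]: "X \<in> borel_measurable M" "Y \<in> borel_measurable M"
    and joint: "distr M borel X \<Otimes>\<^sub>M distr M borel Y = distr M (borel \<Otimes>\<^sub>M borel) (\<lambda>x. (X x, Y x))"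
    using ind unfolding indep_var_distribution_eq by auto
  interpret PX: prob_space "distr M borel X" by (rule prob_space_distr) simp
  interpret PY: prob_space "distr M borel Y" by (rule prob_space_distr) simp
  interpret PP: pair_prob_space "distr M borel X" "distr M borel Y" ..
  have "sets (distr M borel X \<Otimes>\<^sub>M distr M borel Y) = sets (borel \<Otimes>\<^sub>M borel)"
    by (intro sets_pair_measure_cong) auto
  then have h_pair: "h \<in> borel_measurable (distr M borel X \<Otimes>\<^sub>M distr M borel Y)"
    using measurable_cong_sets h by blast
  have "(\<integral>\<^sup>+\<omega>. h (X \<omega>, Y \<omega>) \<partial>M) = (\<integral>\<^sup>+z. h z \<partial>(distr M borel X \<Otimes>\<^sub>M distr M borel Y))"
    by (simp add: joint nn_integral_distr)
  also have "\<dots> = (\<integral>\<^sup>+y. (\<integral>\<^sup>+x. h (x, y) \<partial>distr M borel X) \<partial>distr M borel Y)"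
    by (rule PP.nn_integral_snd[OF h_pair, symmetric])
  also have "\<dots> = (\<integral>\<^sup>+\<omega>. (\<integral>\<^sup>+\<omega>'. h (X \<omega>', Y \<omega>) \<partial>M) \<partial>M)"
    by (simp add: nn_integral_distr PX.borel_measurable_nn_integral)
  finally show ?thesis .
qed

lemma (in prob_space) indep_var_expectation_iterated:
  fixes X Y :: "'a \<Rightarrow> real" and h :: "real \<times> real \<Rightarrow> real"
  assumes ind: "indep_var borel X borel Y"
    and h[measurable]: "h \<in> borel_measurable (borel \<Otimes>\<^sub>M borel)"
    and h_bounds: "\<And>z. 0 \<le> h z \<and> h z \<le> 1"
  shows "expectation (\<lambda>\<omega>. h (X \<omega>, Y \<omega>)) = expectation (\<lambda>\<omega>. expectation (\<lambda>\<omega>'. h (X \<omega>', Y \<omega>)))"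
proof -
  have [measurable]: "X \<in> borel_measurable M" "Y \<in> borel_measurable M"
    using ind unfolding indep_var_distribution_eq by auto
  have nn_eq: "(\<integral>\<^sup>+\<omega>. ennreal (f \<omega>) \<partial>M) = ennreal (expectation f)"
    if [measurable]: "f \<in> borel_measurable M" and f: "\<And>\<omega>. 0 \<le> f \<omega> \<and> f \<omega> \<le> 1" for f
    by (rule nn_integral_eq_integral) (auto intro!: integrable_const_bound[where B=1] simp: f)
  have inner_bounds: "0 \<le> expectation (\<lambda>\<omega>'. h (X \<omega>', y)) \<and> expectation (\<lambda>\<omega>'. h (X \<omega>', y)) \<le> 1" for y
    using h_bounds
    by (auto intro!: integral_nonneg integral_le_const integrable_const_bound[where B=1])
  have "ennreal (expectation (\<lambda>\<omega>. h (X \<omega>, Y \<omega>))) = (\<integral>\<^sup>+\<omega>. ennreal (h (X \<omega>, Y \<omega>)) \<partial>M)"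
    by (rule nn_eq[symmetric]) (auto simp: h_bounds)
  also have "\<dots> = (\<integral>\<^sup>+\<omega>. (\<integral>\<^sup>+\<omega>'. ennreal (h (X \<omega>', Y \<omega>)) \<partial>M) \<partial>M)"
    by (rule indep_var_nn_integral_iterated[OF ind]) measurable
  also have "\<dots> = (\<integral>\<^sup>+\<omega>. ennreal (expectation (\<lambda>\<omega>'. h (X \<omega>', Y \<omega>))) \<partial>M)"
    by (intro nn_integral_cong nn_eq) (auto simp: h_bounds)
  also have "\<dots> = ennreal (expectation (\<lambda>\<omega>. expectation (\<lambda>\<omega>'. h (X \<omega>', Y \<omega>))))"
    by (rule nn_eq) (auto simp: inner_bounds)
  finally show ?thesis
    using inner_bounds h_bounds by (simp add: integral_nonneg)
qed

lemma nn_integral_exponential_exp_neg_max_diff: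
  fixes \<mu> c :: real
  assumes \<mu>: "\<mu> > 0" and c: "c \<ge> 0"
  shows "(\<integral>\<^sup>+x. ennreal (exponential_density \<mu> x) * ennreal (exp (- \<mu> * max 0 (x - c))) \<partial>lborel)
     = ennreal (1 - exp (- \<mu> * c) / 2)"
proof -
  define f where "f x = ennreal (\<mu> * exp (- \<mu> * x)) * indicator {0..c} x" for x
  define g where "g x = ennreal (\<mu> * exp (\<mu> * c) * exp (- (2 * \<mu>) * x)) * indicator {c..} x" for x
  have split: "ennreal (exponential_density \<mu> x) * ennreal (exp (- \<mu> * max 0 (x - c))) = f x + g x"
    if "x \<noteq> c" for x
  proof (cases "x < c")
    case True
    with c show ?thesis
      by (auto simp: f_def g_def exponential_density_def indicator_def ennreal_mult'[symmetric] mult.commute)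
  next
    case False
    have "exponential_density \<mu> x * exp (- \<mu> * max 0 (x - c)) = \<mu> * exp (\<mu> * c) * exp (- (2 * \<mu>) * x)"
      using False c by (simp add: exponential_density_def exp_add[symmetric] algebra_simps)
    with False that c \<mu> show ?thesis
      by (simp add: f_def g_def indicator_def ennreal_mult[symmetric] exponential_density_nonneg)
  qed
  have f_int: "(\<integral>\<^sup>+x. f x \<partial>lborel) = ennreal (1 - exp (- \<mu> * c))"
  proof -
    have "(\<integral>\<^sup>+x. f x \<partial>lborel) = ennreal ((- exp (- \<mu> * c)) - (- exp (- \<mu> * 0)))"
      unfolding f_def by (rule nn_integral_FTC_Icc) (use \<mu> c in \<open>auto intro!: derivative_eq_intros\<close>)
    then show ?thesis by simp
  qed
  have g_int: "(\<integral>\<^sup>+x. g x \<partial>lborel) = ennreal (exp (- \<mu> * c) / 2)"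
  proof -
    define G where "G x = - exp (\<mu> * c) * exp (- (2 * \<mu>) * x) / 2" for x
    have "filterlim (\<lambda>x. - (2 * \<mu>) * x) at_bot at_top"
      by (rule filterlim_tendsto_neg_mult_at_bot[OF tendsto_const]) (use \<mu> in \<open>auto simp: filterlim_ident\<close>)
    then have "((\<lambda>x. exp (- (2 * \<mu>) * x)) \<longlongrightarrow> 0) at_top"
      by (rule filterlim_compose[OF exp_at_bot])
    then have "(G \<longlongrightarrow> - exp (\<mu> * c) * 0 / 2) at_top"
      unfolding G_def by (intro tendsto_intros) simp_all
    then have "(G \<longlongrightarrow> 0) at_top"
      by simp
    moreover have "DERIV G x :> \<mu> * exp (\<mu> * c) * exp (- (2 * \<mu>) * x)" for x
      unfolding G_def by (auto intro!: derivative_eq_intros)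
    ultimately have "(\<integral>\<^sup>+x. g x \<partial>lborel) = ennreal (0 - G c)"
      unfolding g_def using \<mu> by (intro nn_integral_FTC_atLeast) auto
    also have "G c = - exp (- \<mu> * c) / 2"
      by (simp add: G_def exp_add[symmetric])
    finally show ?thesis by simp
  qed
  have "(\<integral>\<^sup>+x. ennreal (exponential_density \<mu> x) * ennreal (exp (- \<mu> * max 0 (x - c))) \<partial>lborel)
      = (\<integral>\<^sup>+x. f x + g x \<partial>lborel)"
    using split by (intro nn_integral_cong_AE eventually_mono[OF AE_lborel_singleton[of c]]) auto
  also have "\<dots> = (\<integral>\<^sup>+x. f x \<partial>lborel) + (\<integral>\<^sup>+x. g x \<partial>lborel)"
    by (rule nn_integral_add) (auto simp: f_def g_def)
  also have "\<dots> = ennreal (1 - exp (- \<mu> * c) / 2)"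
    using \<mu> c by (simp add: f_int g_int ennreal_plus[symmetric] del: ennreal_plus)
  finally show ?thesis .
qed

lemma (in prob_space) expectation_exp_neg_max_diff_exponential:
  assumes B: "distributed M lborel B (exponential_density \<mu>)" and \<mu>: "\<mu> > 0" and c: "c \<ge> 0"
  shows "expectation (\<lambda>\<omega>. exp (- \<mu> * max 0 (B \<omega> - c))) = 1 - exp (- \<mu> * c) / 2"
proof -
  have [measurable]: "B \<in> borel_measurable M"
    using distributed_measurable[OF B] by simp
  have "ennreal (expectation (\<lambda>\<omega>. exp (- \<mu> * max 0 (B \<omega> - c))))
      = (\<integral>\<^sup>+\<omega>. ennreal (exp (- \<mu> * max 0 (B \<omega> - c))) \<partial>M)"
    using \<mu> by (intro nn_integral_eq_integral[symmetric] integrable_const_bound[where B=1]) auto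
  also have "\<dots> = (\<integral>\<^sup>+x. ennreal (exponential_density \<mu> x) * ennreal (exp (- \<mu> * max 0 (x - c))) \<partial>lborel)"
    by (rule distributed_nn_integral[OF B, symmetric]) simp
  also have "\<dots> = ennreal (1 - exp (- \<mu> * c) / 2)"
    by (rule nn_integral_exponential_exp_neg_max_diff[OF \<mu> c])
  finally have "ennreal (expectation (\<lambda>\<omega>. exp (- \<mu> * max 0 (B \<omega> - c)))) = ennreal (1 - exp (- \<mu> * c) / 2)" .
  moreover have "exp (- \<mu> * c) \<le> 1"
    using \<mu> c by simp
  then have "0 \<le> 1 - exp (- \<mu> * c) / 2"
    by linarith
  ultimately show ?thesis
    by (subst (asm) ennreal_inj) (auto intro: integral_nonneg)
qed

context prob_space
begin

lemma integrable_exp_neg_nonneg: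
  fixes C :: "'a \<Rightarrow> real"
  assumes \<mu>: "\<mu> \<ge> 0" and [measurable]: "C \<in> borel_measurable M"
    and C_nonneg: "\<And>\<omega>. \<omega> \<in> space M \<Longrightarrow> C \<omega> \<ge> 0"
  shows "integrable M (\<lambda>\<omega>. exp (- \<mu> * C \<omega>))"
proof (rule integrable_const_bound[where B=1])
  show "AE \<omega> in M. norm (exp (- \<mu> * C \<omega>)) \<le> 1"
  proof (rule AE_I2)
    fix \<omega> assume "\<omega> \<in> space M"
    then have "0 \<le> \<mu> * C \<omega>"
      using \<mu> C_nonneg by simp
    then show "norm (exp (- \<mu> * C \<omega>)) \<le> 1"
      by simp
  qed
qed measurable

lemma prob_max_diff_le_indep_exponential:
  assumes B: "distributed M lborel B (exponential_density \<mu>)" and \<mu>: "\<mu> > 0"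
    and C[measurable]: "C \<in> borel_measurable M" and C_nonneg: "\<And>\<omega>. \<omega> \<in> space M \<Longrightarrow> C \<omega> \<ge> 0"
    and ind: "indep_var borel B borel C" and x: "x \<ge> 0"
  shows "prob {\<omega> \<in> space M. max 0 (B \<omega> - C \<omega>) \<le> x} = 1 - exp (- \<mu> * x) * expectation (\<lambda>\<omega>. exp (- \<mu> * C \<omega>))"
proof -
  have [measurable]: "B \<in> borel_measurable M"
    using distributed_measurable[OF B] by simp
  define h :: "real \<times> real \<Rightarrow> real" where "h = indicator {z. max 0 (fst z - snd z) \<le> x}"
  have inner: "expectation (\<lambda>\<omega>'. h (B \<omega>', C \<omega>)) = 1 - exp (- \<mu> * x) * exp (- \<mu> * C \<omega>)"
    if "\<omega> \<in> space M" for \<omega>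
  proof -
    have "expectation (\<lambda>\<omega>'. h (B \<omega>', C \<omega>)) = expectation (indicator {\<omega>' \<in> space M. B \<omega>' \<le> x + C \<omega>})"
      by (rule Bochner_Integration.integral_cong) (use x in \<open>auto simp: h_def indicator_def\<close>)
    also have "\<dots> = prob {\<omega>' \<in> space M. B \<omega>' \<le> x + C \<omega>}"
      by simp
    also have "\<dots> = 1 - exp (- (x + C \<omega>) * \<mu>)"
      using exponential_distributedD_le[OF B _ \<mu>, of "x + C \<omega>"] x C_nonneg[OF that] by simp
    finally show ?thesis
      by (simp add: exp_add[symmetric] algebra_simps)
  qed
  have "prob {\<omega> \<in> space M. max 0 (B \<omega> - C \<omega>) \<le> x}
      = expectation (indicator {\<omega> \<in> space M. max 0 (B \<omega> - C \<omega>) \<le> x})"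
    by simp
  also have "\<dots> = expectation (\<lambda>\<omega>. h (B \<omega>, C \<omega>))"
    by (rule Bochner_Integration.integral_cong) (auto simp: h_def indicator_def)
  also have "\<dots> = expectation (\<lambda>\<omega>. expectation (\<lambda>\<omega>'. h (B \<omega>', C \<omega>)))"
    by (rule indep_var_expectation_iterated[OF ind]) (auto simp: h_def)
  also have "\<dots> = expectation (\<lambda>\<omega>. 1 - exp (- \<mu> * x) * exp (- \<mu> * C \<omega>))"
    by (rule Bochner_Integration.integral_cong) (simp_all add: inner)
  also have "\<dots> = 1 - exp (- \<mu> * x) * expectation (\<lambda>\<omega>. exp (- \<mu> * C \<omega>))"
    using integrable_exp_neg_nonneg[OF less_imp_le[OF \<mu>] C C_nonneg] by (simp add: prob_space)
  finally show ?thesis .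
qed

lemma expectation_exp_neg_max_diff_indep_exponential:
  assumes B: "distributed M lborel B (exponential_density \<mu>)" and \<mu>: "\<mu> > 0"
    and C[measurable]: "C \<in> borel_measurable M" and C_nonneg: "\<And>\<omega>. \<omega> \<in> space M \<Longrightarrow> C \<omega> \<ge> 0"
    and ind: "indep_var borel B borel C"
  shows "expectation (\<lambda>\<omega>. exp (- \<mu> * max 0 (B \<omega> - C \<omega>))) = 1 - expectation (\<lambda>\<omega>. exp (- \<mu> * C \<omega>)) / 2"
proof -
  have [measurable]: "B \<in> borel_measurable M"
    using distributed_measurable[OF B] by simp
  define h :: "real \<times> real \<Rightarrow> real" where "h z = exp (- \<mu> * max 0 (fst z - snd z))" for z
  have "expectation (\<lambda>\<omega>. h (B \<omega>, C \<omega>)) = expectation (\<lambda>\<omega>. expectation (\<lambda>\<omega>'. h (B \<omega>', C \<omega>)))"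
    by (rule indep_var_expectation_iterated[OF ind]) (use \<mu> in \<open>auto simp: h_def\<close>)
  also have "\<dots> = expectation (\<lambda>\<omega>. 1 - exp (- \<mu> * C \<omega>) / 2)"
  proof (rule Bochner_Integration.integral_cong)
    fix \<omega> assume "\<omega> \<in> space M"
    then show "expectation (\<lambda>\<omega>'. h (B \<omega>', C \<omega>)) = 1 - exp (- \<mu> * C \<omega>) / 2"
      unfolding h_def fst_conv snd_conv
      by (intro expectation_exp_neg_max_diff_exponential[OF B \<mu> C_nonneg])
  qed simp
  also have "\<dots> = 1 - expectation (\<lambda>\<omega>. exp (- \<mu> * C \<omega>)) / 2"
    using integrable_exp_neg_nonneg[OF less_imp_le[OF \<mu>] C C_nonneg] by (simp add: prob_space)
  finally show ?thesis
    by (simp add: h_def)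
qed

end

lemma (in prob_space) indep_var_component_restrict:
  fixes X :: "'i \<Rightarrow> 'a \<Rightarrow> real" and f :: "('i \<Rightarrow> real) \<Rightarrow> real"
  assumes ind: "indep_vars (\<lambda>_. borel) X I" and i: "i \<in> I" "i \<notin> J" and J: "J \<subseteq> I"
    and f: "f \<in> borel_measurable (PiM J (\<lambda>_. borel))"
  shows "indep_var borel (X i) borel (\<lambda>\<omega>. f (restrict (\<lambda>j. X j \<omega>) J))"
proof -
  have "indep_var (PiM {i} (\<lambda>_. borel)) (\<lambda>\<omega>. restrict (\<lambda>j. X j \<omega>) {i})
      (PiM J (\<lambda>_. borel)) (\<lambda>\<omega>. restrict (\<lambda>j. X j \<omega>) J)"
    by (rule indep_var_restrict[OF ind]) (use i J in auto)
  from indep_var_compose[OF this measurable_component_singleton f]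
  have "indep_var borel ((\<lambda>y. y i) \<circ> (\<lambda>\<omega>. restrict (\<lambda>j. X j \<omega>) {i}))
      borel (f \<circ> (\<lambda>\<omega>. restrict (\<lambda>j. X j \<omega>) J))"
    by simp
  moreover have "(\<lambda>y. y i) \<circ> (\<lambda>\<omega>. restrict (\<lambda>j. X j \<omega>) {i}) = X i"
    by auto
  ultimately show ?thesis
    by (simp add: comp_def)
qed

lemma affine_recurrence_closed_form:
  fixes u :: "nat \<Rightarrow> 'a::field"
  assumes r: "r \<noteq> 1" and u: "\<And>k. u (Suc k) = c + r * u k"
  shows "u k = c / (1 - r) + r ^ k * (u 0 - c / (1 - r))"
proof -
  define d where "d = c / (1 - r)"
  have fixpoint: "c + r * d = d"
    using r by (simp add: d_def field_simps)
  have "u k = d + r ^ k * (u 0 - d)"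
  proof (induction k)
    case (Suc k)
    have "u (Suc k) = (c + r * d) + r ^ Suc k * (u 0 - d)"
      by (simp add: u Suc algebra_simps)
    then show ?case
      by (simp only: fixpoint)
  qed simp
  then show ?thesis
    by (simp add: d_def)
qed

text \<open>
  \<open>iterate_W w n y\<close> computes \<open>W n\<close> from a sample path \<open>y\<close> of the inputs, with \<open>A k\<close> at
  \<open>Inl k\<close> and \<open>B k\<close> at \<open>Inr k\<close>. It only reads the coordinates in \<open>W_inputs n\<close>, which is
  how independence of \<open>W n\<close> from \<open>A n\<close> and \<open>B (n + 1)\<close> is derived.
\<close>

primrec iterate_W :: "real \<Rightarrow> nat \<Rightarrow> (nat + nat \<Rightarrow> real) \<Rightarrow> real" where
  "iterate_W w 0 y = w"
| "iterate_W w (Suc n) y = (if n = 0 then w else max 0 (y (Inr (Suc n)) - y (Inl n) - iterate_W w n y))"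

definition W_inputs :: "nat \<Rightarrow> (nat + nat) set" where
  "W_inputs n = Inl ` {1..<n} \<union> Inr ` {1..n}"

lemma W_inputs_mono: "W_inputs n \<subseteq> W_inputs (Suc n)"
  by (auto simp: W_inputs_def)

lemma iterate_W_cong: "(\<And>i. i \<in> W_inputs n \<Longrightarrow> y i = y' i) \<Longrightarrow> iterate_W w n y = iterate_W w n y'"
proof (induction n)
  case (Suc n)
  then have "iterate_W w n y = iterate_W w n y'"
    using W_inputs_mono by blast
  moreover have "n \<noteq> 0 \<Longrightarrow> Inr (Suc n) \<in> W_inputs (Suc n) \<and> Inl n \<in> W_inputs (Suc n)"
    by (auto simp: W_inputs_def)
  ultimately show ?case
    using Suc.prems by simp
qed simp

lemma measurable_iterate_W:
  assumes "W_inputs n \<subseteq> K"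
  shows "iterate_W w n \<in> borel_measurable (PiM K (\<lambda>_. borel))"
  using assms
proof (induction n)
  case 0
  have "iterate_W w 0 = (\<lambda>_. w)"
    by (simp add: fun_eq_iff)
  then show ?case
    by simp
next
  case (Suc n)
  show ?case
  proof (cases "n = 0")
    case True
    then have "iterate_W w (Suc n) = (\<lambda>_. w)"
      by (simp add: fun_eq_iff)
    then show ?thesis
      by simp
  next
    case False
    then have "Inr (Suc n) \<in> K" "Inl n \<in> K"
      using Suc.prems by (auto simp: W_inputs_def)
    note [measurable] = measurable_component_singleton[OF this(1), of "\<lambda>_. borel"]
      measurable_component_singleton[OF this(2), of "\<lambda>_. borel"]
    have [measurable]: "iterate_W w n \<in> borel_measurable (PiM K (\<lambda>_. borel))"
      using Suc W_inputs_mono by blast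
    have "(\<lambda>y. max 0 (y (Inr (Suc n)) - y (Inl n) - iterate_W w n y)) \<in> borel_measurable (PiM K (\<lambda>_. borel))"
      by measurable
    moreover have "iterate_W w (Suc n) = (\<lambda>y. max 0 (y (Inr (Suc n)) - y (Inl n) - iterate_W w n y))"
      using False by (simp add: fun_eq_iff)
    ultimately show ?thesis
      by (simp only:)
  qed
qed

locale reflected_exponential_recursion = prob_space M
  for M :: "'a measure" and A B W :: "nat \<Rightarrow> 'a \<Rightarrow> real" and \<mu> w1 :: real +
  assumes A_rv: "\<And>n. n \<ge> 1 \<Longrightarrow> A n \<in> borel_measurable M"
    and A_nonneg: "\<And>n \<omega>. n \<ge> 1 \<Longrightarrow> \<omega> \<in> space M \<Longrightarrow> A n \<omega> \<ge> 0"
    and A_ident: "\<And>n. n \<ge> 1 \<Longrightarrow> distr M borel (A n) = distr M borel (A 1)"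
    and \<mu>_pos: "\<mu> > 0"
    and B_exp: "\<And>n. n \<ge> 1 \<Longrightarrow> distributed M lborel (B n) (exponential_density \<mu>)"
    and indep: "indep_vars (\<lambda>_. borel) (\<lambda>i. case i of Inl n \<Rightarrow> A n | Inr n \<Rightarrow> B n)
                  (Inl ` {1..} \<union> Inr ` {1..})"
    and w1_nonneg: "w1 \<ge> 0"
    and W1: "\<And>\<omega>. W 1 \<omega> = w1"
    and W_rec: "\<And>n \<omega>. n \<ge> 1 \<Longrightarrow> W (n + 1) \<omega> = max 0 (B (n + 1) \<omega> - A n \<omega> - W n \<omega>)"
begin

definition laplace_A :: real where
  "laplace_A = expectation (\<lambda>\<omega>. exp (- \<mu> * A 1 \<omega>))"

definition laplace_W :: "nat \<Rightarrow> real" where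
  "laplace_W n = expectation (\<lambda>\<omega>. exp (- \<mu> * W n \<omega>))"

definition inputs :: "nat + nat \<Rightarrow> 'a \<Rightarrow> real" where
  "inputs i = (case i of Inl n \<Rightarrow> A n | Inr n \<Rightarrow> B n)"

lemma B_measurable [measurable]: "n \<ge> 1 \<Longrightarrow> B n \<in> borel_measurable M"
  using distributed_measurable[OF B_exp] by simp

lemma W_eq_iterate_W: "n \<ge> 1 \<Longrightarrow> W n \<omega> = iterate_W w1 n (\<lambda>i. inputs i \<omega>)"
proof (induction n)
  case (Suc n)
  then show ?case
    using W1 W_rec[of n \<omega>] by (cases "n = 0") (auto simp: inputs_def)
qed simp

lemma W_measurable [measurable]: "n \<ge> 1 \<Longrightarrow> W n \<in> borel_measurable M"
proof (induction n)
  case (Suc n)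
  show ?case
  proof (cases "n = 0")
    case False
    then have "W (Suc n) = (\<lambda>\<omega>. max 0 (B (Suc n) \<omega> - A n \<omega> - W n \<omega>))"
      using W_rec[of n] by auto
    with False Suc A_rv[of n] show ?thesis
      by simp
  next
    case True
    then have "W (Suc n) = (\<lambda>_. w1)"
      using W1 by auto
    then show ?thesis
      by simp
  qed
qed simp

lemma W_nonneg: "n \<ge> 1 \<Longrightarrow> W n \<omega> \<ge> 0"
  using W1 W_rec[of "n - 1" \<omega>] w1_nonneg by (cases "n = 1") auto

lemma W_eq_restrict: "n \<ge> 1 \<Longrightarrow> W_inputs n \<subseteq> K \<Longrightarrow> W n \<omega> = iterate_W w1 n (restrict (\<lambda>i. inputs i \<omega>) K)"
  unfolding W_eq_iterate_W by (rule iterate_W_cong) auto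

lemma indep_inputs: "indep_vars (\<lambda>_. borel) inputs (Inl ` {1..} \<union> Inr ` {1..})"
  using indep unfolding inputs_def .

lemma indep_A_W: "n \<ge> 1 \<Longrightarrow> indep_var borel (A n) borel (W n)"
proof -
  assume n: "n \<ge> 1"
  have "indep_var borel (inputs (Inl n)) borel (\<lambda>\<omega>. iterate_W w1 n (restrict (\<lambda>i. inputs i \<omega>) (W_inputs n)))"
    by (rule indep_var_component_restrict[OF indep_inputs])
      (use n in \<open>auto simp: W_inputs_def intro: measurable_iterate_W\<close>)
  moreover have "(\<lambda>\<omega>. iterate_W w1 n (restrict (\<lambda>i. inputs i \<omega>) (W_inputs n))) = W n"
    using W_eq_restrict[OF n order_refl] by (simp add: fun_eq_iff)
  ultimately show ?thesis
    by (simp add: inputs_def)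
qed

lemma indep_B_A_W: "n \<ge> 1 \<Longrightarrow> indep_var borel (B (n + 1)) borel (\<lambda>\<omega>. A n \<omega> + W n \<omega>)"
proof -
  assume n: "n \<ge> 1"
  define J where "J = insert (Inl n) (W_inputs n)"
  define f where "f y = y (Inl n) + iterate_W w1 n y" for y
  have J: "Inl n \<in> J" "W_inputs n \<subseteq> J"
    by (auto simp: J_def)
  note [measurable] = measurable_component_singleton[OF J(1), of "\<lambda>_. borel"]
    measurable_iterate_W[OF J(2), of w1]
  have "f \<in> borel_measurable (PiM J (\<lambda>_. borel))"
    unfolding f_def by measurable
  then have "indep_var borel (inputs (Inr (n + 1))) borel (\<lambda>\<omega>. f (restrict (\<lambda>i. inputs i \<omega>) J))"
    by (intro indep_var_component_restrict[OF indep_inputs]) (use n in \<open>auto simp: J_def W_inputs_def\<close>)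
  moreover have "(\<lambda>\<omega>. f (restrict (\<lambda>i. inputs i \<omega>) J)) = (\<lambda>\<omega>. A n \<omega> + W n \<omega>)"
    using W_eq_restrict[OF n J(2)] J(1) by (simp add: f_def inputs_def fun_eq_iff)
  ultimately show ?thesis
    by (simp add: inputs_def)
qed

lemma expectation_exp_neg_A:
  assumes n: "n \<ge> 1"
  shows "expectation (\<lambda>\<omega>. exp (- \<mu> * A n \<omega>)) = laplace_A"
proof -
  have "expectation (\<lambda>\<omega>. exp (- \<mu> * A n \<omega>)) = (\<integral>x. exp (- \<mu> * x) \<partial>distr M borel (A n))"
    by (subst integral_distr) (use A_rv[OF n] in auto)
  also have "\<dots> = (\<integral>x. exp (- \<mu> * x) \<partial>distr M borel (A 1))"
    by (simp only: A_ident[OF n])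
  also have "\<dots> = laplace_A"
    unfolding laplace_A_def by (subst integral_distr) (use A_rv[of 1] in auto)
  finally show ?thesis .
qed

lemma laplace_A_nonneg: "laplace_A \<ge> 0"
  unfolding laplace_A_def by (rule Bochner_Integration.integral_nonneg) simp

lemma expectation_exp_neg_A_W:
  assumes n: "n \<ge> 1"
  shows "expectation (\<lambda>\<omega>. exp (- \<mu> * (A n \<omega> + W n \<omega>))) = laplace_A * laplace_W n"
proof -
  define e :: "real \<Rightarrow> real" where "e x = exp (- \<mu> * x)" for x
  have [measurable]: "A n \<in> borel_measurable M" "W n \<in> borel_measurable M"
    using A_rv[OF n] W_measurable[OF n] .
  have "indep_var borel (e \<circ> A n) borel (e \<circ> W n)"
    by (rule indep_var_compose[OF indep_A_W[OF n]]) (simp_all add: e_def[abs_def])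
  moreover have "integrable M (e \<circ> A n)"
    unfolding comp_def e_def by (rule integrable_exp_neg_nonneg) (use \<mu>_pos A_nonneg[OF n] in auto)
  moreover have "integrable M (e \<circ> W n)"
    unfolding comp_def e_def by (rule integrable_exp_neg_nonneg) (use \<mu>_pos W_nonneg[OF n] in auto)
  ultimately have "expectation (\<lambda>\<omega>. (e \<circ> A n) \<omega> * (e \<circ> W n) \<omega>) = expectation (e \<circ> A n) * expectation (e \<circ> W n)"
    by (rule indep_var_lebesgue_integral)
  then show ?thesis
    using expectation_exp_neg_A[OF n]
    by (simp add: e_def laplace_W_def comp_def distrib_left exp_add[symmetric])
qed

lemma W_Suc_eq_max_diff:
  assumes "n \<ge> 1"
  shows "W (n + 1) \<omega> = max 0 (B (n + 1) \<omega> - (A n \<omega> + W n \<omega>))"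
  using W_rec[OF assms] by simp

lemma A_plus_W_measurable: "n \<ge> 1 \<Longrightarrow> (\<lambda>\<omega>. A n \<omega> + W n \<omega>) \<in> borel_measurable M"
  using A_rv W_measurable by simp

lemma A_plus_W_nonneg: "n \<ge> 1 \<Longrightarrow> \<omega> \<in> space M \<Longrightarrow> A n \<omega> + W n \<omega> \<ge> 0"
  using A_nonneg W_nonneg by (simp add: add_nonneg_nonneg)

lemma B_Suc_exponential: "distributed M lborel (B (n + 1)) (exponential_density \<mu>)"
  using B_exp by simp

lemma prob_W_Suc_le:
  assumes n: "n \<ge> 1" and x: "x \<ge> 0"
  shows "prob {\<omega> \<in> space M. W (n + 1) \<omega> \<le> x} = 1 - exp (- \<mu> * x) * (laplace_A * laplace_W n)"
proof -
  have "prob {\<omega> \<in> space M. W (n + 1) \<omega> \<le> x}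
      = prob {\<omega> \<in> space M. max 0 (B (n + 1) \<omega> - (A n \<omega> + W n \<omega>)) \<le> x}"
    by (simp only: W_Suc_eq_max_diff[OF n])
  also have "\<dots> = 1 - exp (- \<mu> * x) * expectation (\<lambda>\<omega>. exp (- \<mu> * (A n \<omega> + W n \<omega>)))"
    by (rule prob_max_diff_le_indep_exponential[OF B_Suc_exponential \<mu>_pos A_plus_W_measurable[OF n]
          A_plus_W_nonneg[OF n] indep_B_A_W[OF n] x])
  finally show ?thesis
    by (simp only: expectation_exp_neg_A_W[OF n])
qed

lemma laplace_W_Suc:
  assumes n: "n \<ge> 1"
  shows "laplace_W (n + 1) = 1 - laplace_A * laplace_W n / 2"
proof -
  have "laplace_W (n + 1) = expectation (\<lambda>\<omega>. exp (- \<mu> * max 0 (B (n + 1) \<omega> - (A n \<omega> + W n \<omega>))))"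
    by (simp only: laplace_W_def W_Suc_eq_max_diff[OF n])
  also have "\<dots> = 1 - expectation (\<lambda>\<omega>. exp (- \<mu> * (A n \<omega> + W n \<omega>))) / 2"
    by (rule expectation_exp_neg_max_diff_indep_exponential[OF B_Suc_exponential \<mu>_pos
          A_plus_W_measurable[OF n] A_plus_W_nonneg[OF n] indep_B_A_W[OF n]])
  finally show ?thesis
    by (simp only: expectation_exp_neg_A_W[OF n])
qed

lemma laplace_W_1: "laplace_W 1 = exp (- \<mu> * w1)"
  unfolding laplace_W_def W1 by (simp add: prob_space)

lemma prob_W2_eq_0: "prob {\<omega> \<in> space M. W 2 \<omega> = 0} = 1 - exp (- \<mu> * w1) * laplace_A"
proof -
  have "{\<omega> \<in> space M. W 2 \<omega> = 0} = {\<omega> \<in> space M. W 2 \<omega> \<le> 0}"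
    using W_nonneg[of 2] by (auto intro: order.antisym)
  then show ?thesis
    using prob_W_Suc_le[of 1 0, unfolded one_add_one laplace_W_1] by (simp add: mult.commute)
qed

lemma prob_W_Suc_le_closed_form:
  assumes n: "n \<ge> 1" and x: "x \<ge> 0"
  shows "prob {\<omega> \<in> space M. W (n + 1) \<omega> \<le> x} = 1 - exp (- \<mu> * x) *
    (2 * laplace_A / (2 + laplace_A) + (- laplace_A / 2) ^ (n - 1) *
      ((2 - laplace_A) / (2 + laplace_A) - prob {\<omega> \<in> space M. W 2 \<omega> = 0}))"
proof -
  define a where "a = laplace_A"
  define v where "v k = a * laplace_W (Suc k)" for k
  have a: "a \<ge> 0"
    using laplace_A_nonneg by (simp add: a_def)
  have v_Suc: "v (Suc k) = a + (- a / 2) * v k" for k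
  proof -
    have "laplace_W (Suc (Suc k)) = 1 - laplace_A * laplace_W (Suc k) / 2"
      using laplace_W_Suc[of "Suc k"] by simp
    then show ?thesis
      unfolding v_def a_def by (simp only:) (simp add: algebra_simps)
  qed
  have "v (n - 1) = a / (1 - - a / 2) + (- a / 2) ^ (n - 1) * (v 0 - a / (1 - - a / 2))"
    by (rule affine_recurrence_closed_form) (use v_Suc a in auto)
  moreover have "a / (1 - - a / 2) = 2 * a / (2 + a)"
    using a by (simp add: field_simps)
  moreover have "v 0 - 2 * a / (2 + a) = (2 - a) / (2 + a) - prob {\<omega> \<in> space M. W 2 \<omega> = 0}"
    using a by (simp add: v_def a_def prob_W2_eq_0 laplace_W_1[unfolded One_nat_def] field_simps)
  ultimately show ?thesis
    using prob_W_Suc_le[OF n x] n by (simp add: v_def a_def)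
qed

end

theorem theorem3p1:
  fixes M :: "'a measure" and A B W :: "nat \<Rightarrow> 'a \<Rightarrow> real"
    and \<mu> w1 :: real and \<alpha> :: "real \<Rightarrow> real"
  assumes "prob_space M"
    and A_rv: "\<And>n. n \<ge> 1 \<Longrightarrow> A n \<in> borel_measurable M"
    and A_nonneg: "\<And>n \<omega>. n \<ge> 1 \<Longrightarrow> \<omega> \<in> space M \<Longrightarrow> A n \<omega> \<ge> 0"
    and A_ident: "\<And>n. n \<ge> 1 \<Longrightarrow> distr M borel (A n) = distr M borel (A 1)"
    and \<mu>_pos: "\<mu> > 0"
    and B_exp: "\<And>n. n \<ge> 1 \<Longrightarrow> distributed M lborel (B n) (exponential_density \<mu>)"
    and indep: "prob_space.indep_vars M (\<lambda>_. borel)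
                  (\<lambda>i. case i of Inl n \<Rightarrow> A n | Inr n \<Rightarrow> B n)
                  (Inl ` {1..} \<union> Inr ` {1..})"
    and \<alpha>_def: "\<And>s. \<alpha> s = prob_space.expectation M (\<lambda>\<omega>. exp (- s * A 1 \<omega>))"
    and w1_nonneg: "w1 \<ge> 0"
    and W1: "\<And>\<omega>. W 1 \<omega> = w1"
    and W_rec: "\<And>n \<omega>. n \<ge> 1 \<Longrightarrow> W (n + 1) \<omega> = max 0 (B (n + 1) \<omega> - A n \<omega> - W n \<omega>)"
  shows "measure M {\<omega> \<in> space M. W 2 \<omega> = 0} = 1 - exp (- \<mu> * w1) * \<alpha> \<mu>
    \<and> (\<forall>n x. n \<ge> 1 \<longrightarrow> x \<ge> 0 \<longrightarrow>
         measure M {\<omega> \<in> space M. W (n + 1) \<omega> \<le> x}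
         = 1 - exp (- \<mu> * x) *
             (2 * \<alpha> \<mu> / (2 + \<alpha> \<mu>)
              + (- \<alpha> \<mu> / 2) ^ (n - 1)
                * ((2 - \<alpha> \<mu>) / (2 + \<alpha> \<mu>) - measure M {\<omega> \<in> space M. W 2 \<omega> = 0})))"
proof -
  interpret reflected_exponential_recursion M A B W \<mu> w1
    by (intro reflected_exponential_recursion.intro reflected_exponential_recursion_axioms.intro) (fact assms)+
  have "\<alpha> \<mu> = laplace_A"
    by (simp add: \<alpha>_def laplace_A_def)
  then show ?thesis
    using prob_W2_eq_0 prob_W_Suc_le_closed_form by simp
qed

end
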